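(* Let $n\ge2$ and $1/n\le t\le 1/(n-1)$. Then $P(t)=E_t$.
   Context: $E_t=\{\mathbf{p}\in\mathbb{R}^n:\mathbf{p}\cdot\mathbf{p}\le t,\ \sum_i\mathbf{p}_i=1\}$ and $P(t)=\{\mathbf{p}\in\mathbb{R}^n:\mathbf{p}\ge0,\ \sum_i\mathbf{p}_i=1,\ \mathbf{p}\cdot\mathbf{p}\le t\}$. *)

theory Defs
  imports "HOL-Analysis.Analysis"
begin

text \<open>Vectors in R^n are modelled as real^'n, with n = CARD('n).\<close>

definition E_set :: "real \<Rightarrow> (real ^ 'n) set" where
  "E_set t = {p. p \<bullet> p \<le> t \<and> (\<Sum>i\<in>UNIV. p $ i) = 1}"

definition P_set :: "real \<Rightarrow> (real ^ 'n) set" where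
  "P_set t = {p. (\<forall>i. 0 \<le> p $ i) \<and> (\<Sum>i\<in>UNIV. p $ i) = 1 \<and> p \<bullet> p \<le> t}"

end

(* If a vector with coordinate sum 1 has a negative entry, the remaining n - 1 entries
   sum to more than 1, so by the QM-AM inequality their squares sum to more than 1/(n-1).
   Hence for t \<le> 1/(n-1) the constraint p \<bullet> p \<le> t already forces p \<ge> 0. *)
theory Submission
  imports Defs
begin

lemma sum_of_squares_gt_if_negative_term:
  fixes f :: "'a \<Rightarrow> real"
  assumes "finite I" and "j \<in> I" and "f j < 0" and "(\<Sum>i\<in>I. f i) = 1"
  shows "1 < (real (card I) - 1) * (\<Sum>i\<in>I. (f i)\<^sup>2)"
proof -
  let ?J = "I - {j}"
  have "card I \<ge> 1"
    using assms(1,2) by (auto simp: Suc_le_eq card_gt_0_iff)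
  then have card_J: "real (card ?J) = real (card I) - 1"
    using assms(2) by (simp add: card_Diff_singleton of_nat_diff)
  have "(\<Sum>i\<in>?J. f i) = 1 - f j"
    using assms by (simp add: sum_diff1)
  then have "1 < (\<Sum>i\<in>?J. f i)\<^sup>2"
    using assms(3) by (simp add: one_less_power)
  also have "\<dots> \<le> (\<Sum>i\<in>?J. (f i)\<^sup>2) * real (card ?J)"
    by (rule sum_squared_le_sum_of_squares)
  also have "\<dots> \<le> (\<Sum>i\<in>I. (f i)\<^sup>2) * real (card ?J)"
    using assms(1) by (intro mult_right_mono sum_mono2) auto
  finally show ?thesis
    by (simp add: card_J mult.commute)
qed

lemma inner_self_vec_eq_sum_squares:
  fixes p :: "real ^ 'n"
  shows "p \<bullet> p = (\<Sum>i\<in>UNIV. (p $ i)\<^sup>2)"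
  by (simp add: inner_vec_def power2_eq_square)

theorem lemma4:
  fixes t :: real
  assumes "CARD('n::finite) \<ge> 2"
    and "1 / real CARD('n) \<le> t"
    and "t \<le> 1 / (real CARD('n) - 1)"
  shows "(P_set t :: (real ^ 'n) set) = E_set t"
proof
  show "(P_set t :: (real ^ 'n) set) \<subseteq> E_set t"
    by (auto simp: P_set_def E_set_def)
next
  have "(real CARD('n) - 1) * t \<le> 1"
    using assms(1,3) by (simp add: le_divide_eq mult.commute)
  show "E_set t \<subseteq> (P_set t :: (real ^ 'n) set)"
  proof
    fix p :: "real ^ 'n"
    assume "p \<in> E_set t"
    then have norm_le: "p \<bullet> p \<le> t" and sum_1: "(\<Sum>i\<in>UNIV. p $ i) = 1"
      by (auto simp: E_set_def)
    have "0 \<le> p $ j" for j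
    proof (rule ccontr)
      assume "\<not> 0 \<le> p $ j"
      then have "1 < (real CARD('n) - 1) * (p \<bullet> p)"
        using sum_of_squares_gt_if_negative_term[of UNIV j "\<lambda>i. p $ i"] sum_1
        by (simp add: inner_self_vec_eq_sum_squares)
      also have "\<dots> \<le> (real CARD('n) - 1) * t"
        using assms(1) norm_le by (intro mult_left_mono) auto
      finally show False
        using \<open>(real CARD('n) - 1) * t \<le> 1\<close> by simp
    qed
    then show "p \<in> P_set t"
      using norm_le sum_1 by (simp add: P_set_def)
  qed
qed

end
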